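(* Let $(S,d)$, $(S',d')$, $(R,d_R)$ be Polish spaces and let $g:S'\times S\to R$ be a (Borel measurable) map that is $K$-Lipschitz in the second variable, i.e. $d_R(g(x,y),g(x,z))\le K\,d(y,z)$ for all $x\in S'$, $y,z\in S$. Let $X$ be an $S'$-valued random variable and $Y,Z$ be $S$-valued random variables such that $X$ is independent of $Y$ and $X$ is independent of $Z$. Then $\rho_P^R(g(X,Y),g(X,Z))\le(1\vee K)\,\rho_P^S(Y,Z)$.
   Context: For a Polish space $(S,d)$ and $\mu,\nu\in\mathcal{P}(S)$, the Prokhorov distance is $\rho_P^S(\mu,\nu)=\inf\{\epsilon>0:\mu(B)\le\nu(B^\epsilon)+\epsilon\text{ for all Borel sets }B\}$, where $B^\epsilon=\{x\in S:d(x,B)<\epsilon\}$. For random variables $U,V$ with values in $S$, $\rho_P^S(U,V)$ means $\rho_P^S(\operatorname{law}(U),\operatorname{law}(V))$. $a\vee b=\max(a,b)$. *)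

theory Defs
  imports "HOL-Probability.Probability"
begin

definition eps_nbhd :: "real \<Rightarrow> 'a::metric_space set \<Rightarrow> 'a set" where
  "eps_nbhd e B = {x. infdist x B < e}"

definition prokhorov_dist :: "'a::metric_space measure \<Rightarrow> 'a measure \<Rightarrow> real" where
  "prokhorov_dist \<mu> \<nu> =
     Inf {e. e > 0 \<and> (\<forall>B\<in>sets borel. measure \<mu> B \<le> measure \<nu> (eps_nbhd e B) + e)}"

end

theory Submission
  imports Defs
begin

text \<open>
  By independence, the law of \<open>(X, Y)\<close> is the product \<open>P\<^sub>X \<otimes> P\<^sub>Y\<close>, so the law of \<open>g(X, Y)\<close>
  is the image of \<open>P\<^sub>X \<otimes> P\<^sub>Y\<close> under \<open>g\<close>. Fix \<open>x\<close> and a Borel set \<open>C\<close>. Since \<open>y \<mapsto> g(x, y)\<close>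
  is \<open>L\<close>-Lipschitz with \<open>L = max 1 K\<close>, the \<open>\<epsilon>\<close>-neighbourhood of the slice \<open>{y. g(x, y) \<in> C}\<close>
  lies in the slice of \<open>C\<^sup>L\<^sup>\<epsilon>\<close>; so a Prokhorov bound \<open>\<epsilon>\<close> for \<open>(P\<^sub>Y, P\<^sub>Z)\<close> bounds the slice
  measures, and integrating over \<open>x\<close> (Fubini) gives the bound \<open>L\<epsilon> \<ge> \<epsilon>\<close> for the images.
\<close>

definition prokhorov_bound :: "real \<Rightarrow> 'a::metric_space measure \<Rightarrow> 'a measure \<Rightarrow> bool" where
  "prokhorov_bound e \<mu> \<nu> \<longleftrightarrow> (\<forall>B\<in>sets borel. measure \<mu> B \<le> measure \<nu> (eps_nbhd e B) + e)"

lemma prokhorov_bound_one: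
  assumes "prob_space \<mu>"
  shows "prokhorov_bound 1 \<mu> \<nu>"
  using prob_space.prob_le_1[OF assms] by (auto simp: prokhorov_bound_def intro: add_increasing)

text \<open>The witness \<open>e\<^sub>0\<close> keeps the infimum defining \<^term>\<open>prokhorov_dist \<mu> \<nu>\<close> from being the
  unspecified \<^term>\<open>Inf {} :: real\<close>.\<close>
lemma prokhorov_dist_le_scaled:
  assumes "L > 0" and "e\<^sub>0 > 0" and "prokhorov_bound e\<^sub>0 \<mu> \<nu>"
    and "\<And>e. e > 0 \<Longrightarrow> prokhorov_bound e \<mu> \<nu> \<Longrightarrow> prokhorov_bound (L * e) \<mu>' \<nu>'"
  shows "prokhorov_dist \<mu>' \<nu>' \<le> L * prokhorov_dist \<mu> \<nu>"
proof -
  let ?S = "{e. e > 0 \<and> prokhorov_bound e \<mu> \<nu>}" and ?T = "{e. e > 0 \<and> prokhorov_bound e \<mu>' \<nu>'}"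
  have "Inf ?T / L \<le> Inf ?S"
  proof (rule cInf_greatest)
    show "?S \<noteq> {}" using assms(2,3) by auto
    fix e assume "e \<in> ?S"
    then have "Inf ?T \<le> L * e"
      using assms(1,4) by (intro cInf_lower bdd_belowI[of _ 0]) auto
    then show "Inf ?T / L \<le> e" using assms(1) by (simp add: divide_le_eq mult.commute)
  qed
  then show ?thesis
    using assms(1) by (simp add: prokhorov_dist_def prokhorov_bound_def divide_le_eq mult.commute)
qed

lemma open_eps_nbhd: "open (eps_nbhd e B)"
  unfolding eps_nbhd_def by (intro open_Collect_less continuous_intros)

text \<open>Nonemptiness is needed because \<^prop>\<open>infdist x {} = 0\<close>.\<close>
lemma eps_nbhd_vimage_subset:
  assumes "L-lipschitz_on UNIV f" and "L > 0" and "f -` C \<noteq> {}"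
  shows "eps_nbhd e (f -` C) \<subseteq> f -` eps_nbhd (L * e) C"
proof
  fix z assume "z \<in> eps_nbhd e (f -` C)"
  then have "(INF y\<in>f -` C. dist z y) < e"
    using assms(3) by (simp add: eps_nbhd_def infdist_notempty)
  then obtain y where y: "f y \<in> C" "dist z y < e"
    by (subst (asm) cInf_less_iff) (use assms(3) in auto)
  have "infdist (f z) C \<le> dist (f z) (f y)" using y(1) by (rule infdist_le)
  also have "\<dots> \<le> L * dist z y" using assms(1) by (rule lipschitz_onD) auto
  also have "\<dots> < L * e" using y(2) assms(2) by simp
  finally show "z \<in> f -` eps_nbhd (L * e) C" by (simp add: eps_nbhd_def)
qed

lemma (in prob_space) distr_pair_eq_pair_measure_if_indep_set:
  assumes X: "random_variable S X" and Y: "random_variable T Y"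
    and indep: "indep_set {X -` A \<inter> space M | A. A \<in> sets S} {Y -` B \<inter> space M | B. B \<in> sets T}"
  shows "distr M S X \<Otimes>\<^sub>M distr M T Y = distr M (S \<Otimes>\<^sub>M T) (\<lambda>\<omega>. (X \<omega>, Y \<omega>))"
proof (rule pair_measure_eqI)
  have XY: "random_variable (S \<Otimes>\<^sub>M T) (\<lambda>\<omega>. (X \<omega>, Y \<omega>))"
    using X Y by (rule measurable_Pair)
  show "sigma_finite_measure (distr M S X)" "sigma_finite_measure (distr M T Y)"
    using X Y by (auto intro!: prob_space_imp_sigma_finite prob_space_distr)
  fix A B assume A: "A \<in> sets (distr M S X)" and B: "B \<in> sets (distr M T Y)"
  have "emeasure (distr M (S \<Otimes>\<^sub>M T) (\<lambda>\<omega>. (X \<omega>, Y \<omega>))) (A \<times> B)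
      = emeasure M ((X -` A \<inter> space M) \<inter> (Y -` B \<inter> space M))"
    using A B XY by (subst emeasure_distr) (auto intro!: arg_cong[where f="emeasure M"])
  also have "\<dots> = emeasure M (X -` A \<inter> space M) * emeasure M (Y -` B \<inter> space M)"
  proof -
    have "prob ((X -` A \<inter> space M) \<inter> (Y -` B \<inter> space M)) = prob (X -` A \<inter> space M) * prob (Y -` B \<inter> space M)"
      using A B by (intro indep_setD[OF indep]) auto
    then show ?thesis by (simp add: emeasure_eq_measure ennreal_mult)
  qed
  also have "\<dots> = emeasure (distr M S X) A * emeasure (distr M T Y) B"
    using X Y A B by (simp add: emeasure_distr)
  finally show "emeasure (distr M S X) A * emeasure (distr M T Y) B
      = emeasure (distr M (S \<Otimes>\<^sub>M T) (\<lambda>\<omega>. (X \<omega>, Y \<omega>))) (A \<times> B)" ..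
qed simp

lemma (in prob_space) distr_indep_pair:
  fixes g :: "'x::second_countable_topology \<times> 'y::second_countable_topology \<Rightarrow> 'z::topological_space"
  assumes X: "random_variable borel X" and Y: "random_variable borel Y"
    and indep: "indep_set {X -` A \<inter> space M | A. A \<in> sets borel} {Y -` B \<inter> space M | B. B \<in> sets borel}"
    and g: "g \<in> borel_measurable borel"
  shows "distr M borel (\<lambda>\<omega>. g (X \<omega>, Y \<omega>)) = distr (distr M borel X \<Otimes>\<^sub>M distr M borel Y) borel g"
proof -
  have "g \<in> borel \<Otimes>\<^sub>M borel \<rightarrow>\<^sub>M borel" using g by (simp add: borel_prod)
  with X Y show ?thesis
    unfolding distr_pair_eq_pair_measure_if_indep_set[OF X Y indep]
    by (subst distr_distr) (auto simp: o_def)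
qed

lemma measure_pair_measure_le_if_slices_le:
  assumes "prob_space M\<^sub>1" "prob_space M\<^sub>2" "prob_space M\<^sub>3"
    and A: "A \<in> sets (M\<^sub>1 \<Otimes>\<^sub>M M\<^sub>2)" and B: "B \<in> sets (M\<^sub>1 \<Otimes>\<^sub>M M\<^sub>3)" and "0 \<le> e"
    and slices: "\<And>x. x \<in> space M\<^sub>1 \<Longrightarrow> measure M\<^sub>2 (Pair x -` A) \<le> measure M\<^sub>3 (Pair x -` B) + e"
  shows "measure (M\<^sub>1 \<Otimes>\<^sub>M M\<^sub>2) A \<le> measure (M\<^sub>1 \<Otimes>\<^sub>M M\<^sub>3) B + e"
proof -
  interpret M\<^sub>1: prob_space M\<^sub>1 by fact
  interpret M\<^sub>2: prob_space M\<^sub>2 by fact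
  interpret M\<^sub>3: prob_space M\<^sub>3 by fact
  interpret M\<^sub>1\<^sub>2: prob_space "M\<^sub>1 \<Otimes>\<^sub>M M\<^sub>2" by (intro prob_space_pair; fact)
  interpret M\<^sub>1\<^sub>3: prob_space "M\<^sub>1 \<Otimes>\<^sub>M M\<^sub>3" by (intro prob_space_pair; fact)
  have "emeasure (M\<^sub>1 \<Otimes>\<^sub>M M\<^sub>2) A = (\<integral>\<^sup>+x. emeasure M\<^sub>2 (Pair x -` A) \<partial>M\<^sub>1)"
    using A by (rule M\<^sub>2.emeasure_pair_measure_alt)
  also have "\<dots> \<le> (\<integral>\<^sup>+x. emeasure M\<^sub>3 (Pair x -` B) + e \<partial>M\<^sub>1)"
    using slices \<open>0 \<le> e\<close>
    by (intro nn_integral_mono) (simp add: M\<^sub>2.emeasure_eq_measure M\<^sub>3.emeasure_eq_measure ennreal_plus[symmetric] del: ennreal_plus)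
  also have "\<dots> = (\<integral>\<^sup>+x. emeasure M\<^sub>3 (Pair x -` B) \<partial>M\<^sub>1) + e"
    using B by (subst nn_integral_add) (simp_all add: M\<^sub>3.measurable_emeasure_Pair M\<^sub>1.emeasure_space_1)
  also have "\<dots> = emeasure (M\<^sub>1 \<Otimes>\<^sub>M M\<^sub>3) B + e"
    using B by (simp add: M\<^sub>3.emeasure_pair_measure_alt)
  finally show ?thesis
    using \<open>0 \<le> e\<close> by (simp add: M\<^sub>1\<^sub>2.emeasure_eq_measure M\<^sub>1\<^sub>3.emeasure_eq_measure ennreal_plus[symmetric] del: ennreal_plus)
qed

lemma measure_vimage_le_if_prokhorov_bound:
  assumes "prob_space \<nu>" and "prokhorov_bound e \<mu> \<nu>" and "0 \<le> e"
    and lip: "L-lipschitz_on UNIV f" and "L > 0"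
    and "f -` C \<in> sets borel" and "f -` eps_nbhd (L * e) C \<in> sets \<nu>"
  shows "measure \<mu> (f -` C) \<le> measure \<nu> (f -` eps_nbhd (L * e) C) + e"
proof (cases "f -` C = {}")
  case False
  interpret \<nu>: prob_space \<nu> by fact
  have "measure \<mu> (f -` C) \<le> measure \<nu> (eps_nbhd e (f -` C)) + e"
    using assms(2,6) by (simp add: prokhorov_bound_def)
  also have "measure \<nu> (eps_nbhd e (f -` C)) \<le> measure \<nu> (f -` eps_nbhd (L * e) C)"
    using eps_nbhd_vimage_subset[OF lip \<open>L > 0\<close> False] assms(7) by (rule \<nu>.finite_measure_mono)
  finally show ?thesis by simp
qed (use \<open>0 \<le> e\<close> in simp)

lemma prokhorov_bound_distr_pair:
  fixes g :: "'b::second_countable_topology \<times> 'a::{metric_space, second_countable_topology} \<Rightarrow> 'c::metric_space"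
  assumes PX: "prob_space PX" and PY: "prob_space PY" and PZ: "prob_space PZ"
    and sets_eq: "sets PX = sets borel" "sets PY = sets borel" "sets PZ = sets borel"
    and g: "g \<in> borel_measurable borel"
    and lip: "\<And>x. L-lipschitz_on UNIV (\<lambda>y. g (x, y))" and "1 \<le> L"
    and "0 < e" and bound: "prokhorov_bound e PY PZ"
  shows "prokhorov_bound (L * e) (distr (PX \<Otimes>\<^sub>M PY) borel g) (distr (PX \<Otimes>\<^sub>M PZ) borel g)"
  unfolding prokhorov_bound_def
proof
  fix C :: "'c set" assume C: "C \<in> sets borel"
  define D where "D = eps_nbhd (L * e) C"
  have D: "D \<in> sets borel" unfolding D_def by (intro borel_open open_eps_nbhd)
  have "sets (PX \<Otimes>\<^sub>M PY) = sets borel" "sets (PX \<Otimes>\<^sub>M PZ) = sets borel"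
    using sets_eq by (simp_all add: borel_prod[symmetric] cong: sets_pair_measure_cong)
  then have gY: "g \<in> PX \<Otimes>\<^sub>M PY \<rightarrow>\<^sub>M borel" and gZ: "g \<in> PX \<Otimes>\<^sub>M PZ \<rightarrow>\<^sub>M borel"
    using g by (simp_all cong: measurable_cong_sets)
  have spaces: "space (PX \<Otimes>\<^sub>M PY) = UNIV" "space (PX \<Otimes>\<^sub>M PZ) = UNIV"
    using sets_eq[THEN sets_eq_imp_space_eq] by (simp_all add: space_pair_measure)
  then have gC: "g -` C \<in> sets (PX \<Otimes>\<^sub>M PY)" and gD: "g -` D \<in> sets (PX \<Otimes>\<^sub>M PZ)"
    using measurable_sets[OF gY C] measurable_sets[OF gZ D] by simp_all
  have "measure PY (Pair x -` g -` C) \<le> measure PZ (Pair x -` g -` D) + e" for x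
  proof -
    have "Pair x -` g -` C = (\<lambda>y. g (x, y)) -` C" "Pair x -` g -` D = (\<lambda>y. g (x, y)) -` D"
      by auto
    moreover have "Pair x -` g -` C \<in> sets borel" "Pair x -` g -` D \<in> sets PZ"
      using sets_Pair1[OF gC] sets_Pair1[OF gD] sets_eq(2) by simp_all
    ultimately show ?thesis
      using PZ bound \<open>0 < e\<close> lip \<open>1 \<le> L\<close> unfolding D_def
      by (simp add: measure_vimage_le_if_prokhorov_bound)
  qed
  then have "measure (PX \<Otimes>\<^sub>M PY) (g -` C) \<le> measure (PX \<Otimes>\<^sub>M PZ) (g -` D) + e"
    using gC gD \<open>0 < e\<close> by (intro measure_pair_measure_le_if_slices_le[OF PX PY PZ]) auto
  moreover have "e \<le> L * e" using \<open>0 < e\<close> \<open>1 \<le> L\<close> by simp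
  ultimately show "measure (distr (PX \<Otimes>\<^sub>M PY) borel g) C
      \<le> measure (distr (PX \<Otimes>\<^sub>M PZ) borel g) (eps_nbhd (L * e) C) + L * e"
    using gY gZ C D spaces unfolding D_def by (simp add: measure_distr)
qed

theorem theorem3p6:
  fixes M :: "'w measure"
    and g :: "'b::polish_space \<times> 'a::polish_space \<Rightarrow> 'c::polish_space"
    and X :: "'w \<Rightarrow> 'b" and Y Z :: "'w \<Rightarrow> 'a" and K :: real
  assumes "prob_space M"
    and "g \<in> borel_measurable borel"
    and "\<And>x y z. dist (g (x, y)) (g (x, z)) \<le> K * dist y z"
    and "X \<in> borel_measurable M" and "Y \<in> borel_measurable M" and "Z \<in> borel_measurable M"
    and "prob_space.indep_set M {X -` A \<inter> space M | A. A \<in> sets borel}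
                                {Y -` B \<inter> space M | B. B \<in> sets borel}"
    and "prob_space.indep_set M {X -` A \<inter> space M | A. A \<in> sets borel}
                                {Z -` B \<inter> space M | B. B \<in> sets borel}"
  shows "prokhorov_dist (distr M borel (\<lambda>\<omega>. g (X \<omega>, Y \<omega>))) (distr M borel (\<lambda>\<omega>. g (X \<omega>, Z \<omega>)))
           \<le> max 1 K * prokhorov_dist (distr M borel Y) (distr M borel Z)"
proof -
  interpret prob_space M by fact
  let ?PX = "distr M borel X" and ?PY = "distr M borel Y" and ?PZ = "distr M borel Z"
  have laws: "distr M borel (\<lambda>\<omega>. g (X \<omega>, Y \<omega>)) = distr (?PX \<Otimes>\<^sub>M ?PY) borel g"
    "distr M borel (\<lambda>\<omega>. g (X \<omega>, Z \<omega>)) = distr (?PX \<Otimes>\<^sub>M ?PZ) borel g"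
    using assms by (simp_all add: distr_indep_pair)
  have lip: "(max 1 K)-lipschitz_on UNIV (\<lambda>y. g (x, y))" for x
  proof (rule lipschitz_onI)
    show "dist (g (x, y)) (g (x, z)) \<le> max 1 K * dist y z" for y z
      using assms(3) mult_right_mono[OF max.cobounded2 zero_le_dist] by (rule order_trans)
  qed simp
  have "prokhorov_dist (distr (?PX \<Otimes>\<^sub>M ?PY) borel g) (distr (?PX \<Otimes>\<^sub>M ?PZ) borel g)
      \<le> max 1 K * prokhorov_dist ?PY ?PZ"
  proof (rule prokhorov_dist_le_scaled)
    show "prokhorov_bound 1 ?PY ?PZ"
      using assms(5) by (intro prokhorov_bound_one prob_space_distr)
    fix e :: real assume "0 < e" and "prokhorov_bound e ?PY ?PZ"
    with assms(4-6) lip show "prokhorov_bound (max 1 K * e) (distr (?PX \<Otimes>\<^sub>M ?PY) borel g) (distr (?PX \<Otimes>\<^sub>M ?PZ) borel g)"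
      by (intro prokhorov_bound_distr_pair prob_space_distr assms(2)) simp_all
  qed simp_all
  then show ?thesis unfolding laws .
qed

end
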